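(* If $\Sigma \cup \{x\} \vdash P$ and $v \not\in \Sigma$, then $\Sigma \cup \{v\} \vdash P[v/x]$.
   Context: lqCCS is a quantum process calculus whose processes are built from: discard $\mathbf{0}_{\tilde e}$ (a deadlocked process keeping ownership of the qubits $\tilde e$), $\tau.P$, superoperator application $\mathcal{E}(\tilde e).P$, measurement $M(\tilde e \triangleright x).P$ (measure the qubits $\tilde e$ and bind the classical outcome to $x$), input $c?x.P$, asynchronous output $c!e$, sum $P+Q$, parallel composition $P \parallel Q$, restriction $P \setminus c$, and if-then-else. Typing judgments have the form $\Sigma \vdash P$, where $\Sigma$ is a set of qubit names, used linearly: a qubit name enters $\Sigma$ only by being sent ($\{e\} \vdash c!e$ for a quantum channel $c$) or discarded ($\Sigma \vdash \mathbf{0}_{\tilde e}$ with $\tilde e$ an enumeration of $\Sigma$); a parallel composition $P_1 \parallel P_2$ is typed by $\Sigma_1 \cup \Sigma_2$ only if $\Sigma_1 \vdash P_1$, $\Sigma_2 \vdash P_2$ and $\Sigma_1 \cap \Sigma_2 = \emptyset$; receiving a qubit on a quantum channel, $c?x.P$, is typed by $\Sigma$ when $\Sigma \cup \{x\} \vdash P$; superoperators and measurements may only act on qubits in the current $\Sigma$. Here $x$ is a quantum variable, $v$ a qubit name, and $P[v/x]$ denotes the substitution of $v$ for $x$ in $P$. *)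

theory Defs
  imports Main
begin

text \<open>Syntax of lqCCS.
  'q : qubit names, 'x : quantum variables, 'y : classical variables,
  'c : channel names, 's : superoperator symbols, 'm : measurement symbols,
  'b : boolean guards (classical expressions of if-then-else),
  'e : classical expressions (sent on classical channels).\<close>

datatype ('q, 'x) qexp = QN 'q | QV 'x

datatype ('q, 'x, 'y, 'c, 's, 'm, 'b, 'e) proc =
    Discard "('q, 'x) qexp list"
  | Tau "('q, 'x, 'y, 'c, 's, 'm, 'b, 'e) proc"
  | SupOp 's "('q, 'x) qexp list" "('q, 'x, 'y, 'c, 's, 'm, 'b, 'e) proc"
  | Meas 'm "('q, 'x) qexp list" 'y "('q, 'x, 'y, 'c, 's, 'm, 'b, 'e) proc"
  | QIn 'c 'x "('q, 'x, 'y, 'c, 's, 'm, 'b, 'e) proc"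
  | CIn 'c 'y "('q, 'x, 'y, 'c, 's, 'm, 'b, 'e) proc"
  | QOut 'c "('q, 'x) qexp"
  | COut 'c 'e
  | Sum "('q, 'x, 'y, 'c, 's, 'm, 'b, 'e) proc" "('q, 'x, 'y, 'c, 's, 'm, 'b, 'e) proc"
  | Par "('q, 'x, 'y, 'c, 's, 'm, 'b, 'e) proc" "('q, 'x, 'y, 'c, 's, 'm, 'b, 'e) proc"
  | Res "('q, 'x, 'y, 'c, 's, 'm, 'b, 'e) proc" 'c
  | Ite 'b "('q, 'x, 'y, 'c, 's, 'm, 'b, 'e) proc" "('q, 'x, 'y, 'c, 's, 'm, 'b, 'e) proc"

fun qsubst :: "'q \<Rightarrow> 'x \<Rightarrow> ('q, 'x) qexp \<Rightarrow> ('q, 'x) qexp" where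
  "qsubst v x (QV y) = (if y = x then QN v else QV y)"
| "qsubst v x (QN w) = QN w"

fun psubst :: "'q \<Rightarrow> 'x \<Rightarrow> ('q, 'x, 'y, 'c, 's, 'm, 'b, 'e) proc \<Rightarrow> ('q, 'x, 'y, 'c, 's, 'm, 'b, 'e) proc" where
  "psubst v x (Discard es) = Discard (map (qsubst v x) es)"
| "psubst v x (Tau P) = Tau (psubst v x P)"
| "psubst v x (SupOp E es P) = SupOp E (map (qsubst v x) es) (psubst v x P)"
| "psubst v x (Meas M es y P) = Meas M (map (qsubst v x) es) y (psubst v x P)"
| "psubst v x (QIn c z P) = (if z = x then QIn c z P else QIn c z (psubst v x P))"
| "psubst v x (CIn c y P) = CIn c y (psubst v x P)"
| "psubst v x (QOut c e) = QOut c (qsubst v x e)"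
| "psubst v x (COut c e) = COut c e"
| "psubst v x (Sum P Q) = Sum (psubst v x P) (psubst v x Q)"
| "psubst v x (Par P Q) = Par (psubst v x P) (psubst v x Q)"
| "psubst v x (Res P c) = Res (psubst v x P) c"
| "psubst v x (Ite b P Q) = Ite b (psubst v x P) (psubst v x Q)"

text \<open>Linear typing  \<Sigma> \<turnstile> P ; qch c holds iff c is a quantum channel.\<close>

inductive typed :: "('c \<Rightarrow> bool) \<Rightarrow> ('q, 'x) qexp set \<Rightarrow> ('q, 'x, 'y, 'c, 's, 'm, 'b, 'e) proc \<Rightarrow> bool"
  for qch :: "'c \<Rightarrow> bool" where
  T_Discard: "distinct es \<Longrightarrow> typed qch (set es) (Discard es)"
| T_Tau: "typed qch \<Sigma> P \<Longrightarrow> typed qch \<Sigma> (Tau P)"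
| T_SupOp: "typed qch \<Sigma> P \<Longrightarrow> distinct es \<Longrightarrow> set es \<subseteq> \<Sigma> \<Longrightarrow> typed qch \<Sigma> (SupOp E es P)"
| T_Meas: "typed qch \<Sigma> P \<Longrightarrow> distinct es \<Longrightarrow> set es \<subseteq> \<Sigma> \<Longrightarrow> typed qch \<Sigma> (Meas M es y P)"
| T_QIn: "qch c \<Longrightarrow> QV z \<notin> \<Sigma> \<Longrightarrow> typed qch (\<Sigma> \<union> {QV z}) P \<Longrightarrow> typed qch \<Sigma> (QIn c z P)"
| T_CIn: "\<not> qch c \<Longrightarrow> typed qch \<Sigma> P \<Longrightarrow> typed qch \<Sigma> (CIn c y P)"
| T_QOut: "qch c \<Longrightarrow> typed qch {e} (QOut c e)"
| T_COut: "\<not> qch c \<Longrightarrow> typed qch {} (COut c e)"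
| T_Sum: "typed qch \<Sigma> P \<Longrightarrow> typed qch \<Sigma> Q \<Longrightarrow> typed qch \<Sigma> (Sum P Q)"
| T_Par: "typed qch \<Sigma>1 P \<Longrightarrow> typed qch \<Sigma>2 Q \<Longrightarrow> \<Sigma>1 \<inter> \<Sigma>2 = {} \<Longrightarrow> typed qch (\<Sigma>1 \<union> \<Sigma>2) (Par P Q)"
| T_Res: "typed qch \<Sigma> P \<Longrightarrow> typed qch \<Sigma> (Res P c)"
| T_Ite: "typed qch \<Sigma> P \<Longrightarrow> typed qch \<Sigma> Q \<Longrightarrow> typed qch \<Sigma> (Ite b P Q)"

end

theory Submission
  imports Defs
begin

text \<open>Substituting v for x acts on a type environment as its image under qsubst v x. When v is
  fresh for the environment this map is injective on it, so it preserves the distinctness of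
  discarded and operated-on qubit lists and the disjointness of the environments of parallel
  components. Hence the claim holds for every environment not containing v, whether or not it
  contains x, and a plain rule induction proves it.\<close>

lemma qsubst_conv: "qsubst v x e = (if e = QV x then QN v else e)"
  by (cases e) auto

lemma inj_on_qsubst: "QN v \<notin> A \<Longrightarrow> inj_on (qsubst v x) A"
  by (auto simp: inj_on_def qsubst_conv)

lemma image_qsubst_fresh: "QV x \<notin> A \<Longrightarrow> qsubst v x ` A = A"
  by (auto simp: qsubst_conv image_iff)

lemma image_qsubst_insert_var:
  "QV x \<notin> A \<Longrightarrow> qsubst v x ` (A \<union> {QV x}) = A \<union> {QN v}"
  by (simp add: image_qsubst_fresh)

lemma typed_psubst:
  assumes "typed qch G P" and "QN v \<notin> G"
  shows "typed qch (qsubst v x ` G) (psubst v x P)"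
  using assms
proof (induction rule: typed.induct)
  case (T_Discard es)
  then have "distinct (map (qsubst v x) es)"
    by (simp add: distinct_map inj_on_qsubst)
  from typed.T_Discard[OF this] show ?case by simp
next
  case (T_SupOp \<Sigma> P es E)
  then show ?case
    by (auto intro!: typed.T_SupOp simp: distinct_map inj_on_qsubst subset_eq)
next
  case (T_Meas \<Sigma> P es M y)
  then show ?case
    by (auto intro!: typed.T_Meas simp: distinct_map inj_on_qsubst subset_eq)
next
  case (T_QIn c z \<Sigma> P)
  show ?case
  proof (cases "z = x")
    case True
    with T_QIn.hyps show ?thesis
      by (simp add: image_qsubst_fresh typed.T_QIn)
  next
    case False
    then have "qsubst v x ` (\<Sigma> \<union> {QV z}) = qsubst v x ` \<Sigma> \<union> {QV z}"
      by simp
    moreover have "QV z \<notin> qsubst v x ` \<Sigma>"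
      using T_QIn.hyps(2) by (auto simp: qsubst_conv)
    ultimately show ?thesis
      using T_QIn False by (simp add: typed.T_QIn)
  qed
next
  case (T_Par \<Sigma>1 P \<Sigma>2 Q)
  have "inj_on (qsubst v x) (\<Sigma>1 \<union> \<Sigma>2)"
    using T_Par.prems by (rule inj_on_qsubst)
  then have "qsubst v x ` \<Sigma>1 \<inter> qsubst v x ` \<Sigma>2 = {}"
    using T_Par.hyps(3) by (metis image_empty inj_on_image_Int Un_upper1 Un_upper2)
  with T_Par show ?case
    by (simp add: image_Un typed.T_Par)
qed (auto intro: typed.intros)

theorem lemmaB1:
  fixes qch :: "'c \<Rightarrow> bool"
    and \<Sigma> :: "('q, 'x) qexp set"
    and P :: "('q, 'x, 'y, 'c, 's, 'm, 'b, 'e) proc"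
  assumes "typed qch (\<Sigma> \<union> {QV x}) P"
    and "QV x \<notin> \<Sigma>"
    and "QN v \<notin> \<Sigma>"
  shows "typed qch (\<Sigma> \<union> {QN v}) (psubst v x P)"
proof -
  have "typed qch (qsubst v x ` (\<Sigma> \<union> {QV x})) (psubst v x P)"
    by (rule typed_psubst) (use assms in auto)
  then show ?thesis
    unfolding image_qsubst_insert_var[OF assms(2)] .
qed

end
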